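(* If two topological large scale spaces $X$ and $Y$ are coarsely equivalent, then $\mathrm{Ends}(X)$ is homeomorphic to $\mathrm{Ends}(Y)$.
   Context: A large scale space is a set $X$ with a family $\mathbb{LSS}$ of covers (uniformly bounded covers) such that $st(\mathcal U,\mathcal V)\in\mathbb{LSS}$ whenever $\mathcal U,\mathcal V\in\mathbb{LSS}$, and any cover each of whose elements lies in some element of a member of $\mathbb{LSS}$ is in $\mathbb{LSS}$; here $st(x,\mathcal U)$ is the union of elements of $\mathcal U$ containing $x$, $st(A,\mathcal U)=\bigcup_{x\in A}st(x,\mathcal U)$, $st(\mathcal U,\mathcal V)=\{st(A,\mathcal V):A\in\mathcal U\}$. Bounded sets are subsets of elements of uniformly bounded covers; the union of two bounded sets is assumed bounded. $A$ is coarsely clopen if $st(A,\mathcal U)\cap st(X\setminus A,\mathcal U)$ is bounded for every uniformly bounded $\mathcal U$. An end is a family of unbounded coarsely clopen sets maximal with respect to all finite intersections being unbounded; $\mathrm{Ends}(X)$ is the set of ends. A topological large scale space additionally has a topology for which some uniformly bounded cover consists of open sets; $\mathrm{Ends}(X)$ is topologized by the basis $U_{end}=\{E\in\mathrm{Ends}(X):U\in E\}$, $U$ ranging over open coarsely clopen subsets of $X$. For maps $\varphi,\varphi':X\to Y$ of large scale spaces: they are close if there is a uniformly bounded cover $\mathcal U$ of $Y$ with $\varphi(x)\in st(\varphi'(x),\mathcal U)$ for all $x$; $\varphi$ is coarse if preimages of bounded sets are bounded; $\varphi$ is large scale continuous if for every uniformly bounded cover $\mathcal U$ of $X$ the family $\varphi(\mathcal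 U)$ refines a uniformly bounded cover of $Y$. $\varphi$ is a coarse equivalence if it is coarse and large scale continuous and there is a coarse large scale continuous $\psi:Y\to X$ with $\psi\circ\varphi$ close to $\mathrm{id}_X$ and $\varphi\circ\psi$ close to $\mathrm{id}_Y$; $X,Y$ are then coarsely equivalent. *)

theory Defs
  imports "HOL-Analysis.Analysis"
begin

definition is_cover :: "'a set \<Rightarrow> 'a set set \<Rightarrow> bool" where
  "is_cover X C \<longleftrightarrow> C \<subseteq> Pow X \<and> \<Union>C = X"

definition st_pt :: "'a \<Rightarrow> 'a set set \<Rightarrow> 'a set" where
  "st_pt x U = \<Union>{A \<in> U. x \<in> A}"

definition st_set :: "'a set \<Rightarrow> 'a set set \<Rightarrow> 'a set" where
  "st_set A U = (\<Union>x\<in>A. st_pt x U)"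

definition st_cov :: "'a set set \<Rightarrow> 'a set set \<Rightarrow> 'a set set" where
  "st_cov U V = {st_set A V | A. A \<in> U}"

text \<open>Bounded sets: subsets of elements of uniformly bounded covers.\<close>
definition ls_bounded :: "'a set set set \<Rightarrow> 'a set \<Rightarrow> bool" where
  "ls_bounded L B \<longleftrightarrow> (\<exists>U\<in>L. \<exists>A\<in>U. B \<subseteq> A)"

definition large_scale_space :: "'a set \<Rightarrow> 'a set set set \<Rightarrow> bool" where
  "large_scale_space X L \<longleftrightarrow>
     (\<forall>U\<in>L. is_cover X U) \<and>
     (\<forall>U\<in>L. \<forall>V\<in>L. st_cov U V \<in> L) \<and>
     (\<forall>C. is_cover X C \<and> (\<forall>A\<in>C. \<exists>U\<in>L. \<exists>B\<in>U. A \<subseteq> B) \<longrightarrow> C \<in> L) \<and>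
     (\<forall>A B. ls_bounded L A \<and> ls_bounded L B \<longrightarrow> ls_bounded L (A \<union> B))"

definition topological_large_scale_space :: "'a topology \<Rightarrow> 'a set set set \<Rightarrow> bool" where
  "topological_large_scale_space T L \<longleftrightarrow>
     large_scale_space (topspace T) L \<and> (\<exists>U\<in>L. \<forall>A\<in>U. openin T A)"

definition coarsely_clopen :: "'a set \<Rightarrow> 'a set set set \<Rightarrow> 'a set \<Rightarrow> bool" where
  "coarsely_clopen X L A \<longleftrightarrow> A \<subseteq> X \<and>
     (\<forall>U\<in>L. ls_bounded L (st_set A U \<inter> st_set (X - A) U))"

definition fin_unbounded_family :: "'a set \<Rightarrow> 'a set set set \<Rightarrow> 'a set set \<Rightarrow> bool" where
  "fin_unbounded_family X L E \<longleftrightarrow>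
     (\<forall>A\<in>E. coarsely_clopen X L A \<and> \<not> ls_bounded L A) \<and>
     (\<forall>F. F \<subseteq> E \<and> finite F \<and> F \<noteq> {} \<longrightarrow> \<not> ls_bounded L (\<Inter>F))"

definition is_end :: "'a set \<Rightarrow> 'a set set set \<Rightarrow> 'a set set \<Rightarrow> bool" where
  "is_end X L E \<longleftrightarrow> fin_unbounded_family X L E \<and>
     (\<forall>E'. fin_unbounded_family X L E' \<and> E \<subseteq> E' \<longrightarrow> E' = E)"

definition Ends :: "'a set \<Rightarrow> 'a set set set \<Rightarrow> 'a set set set" where
  "Ends X L = {E. is_end X L E}"

definition ends_topology :: "'a topology \<Rightarrow> 'a set set set \<Rightarrow> 'a set set topology" where
  "ends_topology T L =
     subtopology
       (topology_generated_by
          {{E \<in> Ends (topspace T) L. U \<in> E} | U. openin T U \<and> coarsely_clopen (topspace T) L U})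
       (Ends (topspace T) L)"

definition maps_close :: "'a set \<Rightarrow> 'b set set set \<Rightarrow> ('a \<Rightarrow> 'b) \<Rightarrow> ('a \<Rightarrow> 'b) \<Rightarrow> bool" where
  "maps_close X LY f g \<longleftrightarrow> (\<exists>U\<in>LY. \<forall>x\<in>X. f x \<in> st_pt (g x) U)"

definition coarse_map :: "'a set \<Rightarrow> 'a set set set \<Rightarrow> 'b set \<Rightarrow> 'b set set set \<Rightarrow> ('a \<Rightarrow> 'b) \<Rightarrow> bool" where
  "coarse_map X LX Y LY f \<longleftrightarrow> (\<forall>B. ls_bounded LY B \<longrightarrow> ls_bounded LX (X \<inter> f -` B))"

definition ls_continuous :: "'a set set set \<Rightarrow> 'b set set set \<Rightarrow> ('a \<Rightarrow> 'b) \<Rightarrow> bool" where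
  "ls_continuous LX LY f \<longleftrightarrow> (\<forall>U\<in>LX. \<exists>V\<in>LY. \<forall>A\<in>U. \<exists>B\<in>V. f ` A \<subseteq> B)"

definition coarse_equivalence ::
  "'a set \<Rightarrow> 'a set set set \<Rightarrow> 'b set \<Rightarrow> 'b set set set \<Rightarrow> ('a \<Rightarrow> 'b) \<Rightarrow> bool" where
  "coarse_equivalence X LX Y LY f \<longleftrightarrow>
     f ` X \<subseteq> Y \<and> coarse_map X LX Y LY f \<and> ls_continuous LX LY f \<and>
     (\<exists>g. g ` Y \<subseteq> X \<and> coarse_map Y LY X LX g \<and> ls_continuous LY LX g \<and>
          maps_close X LX (g \<circ> f) id \<and> maps_close Y LY (f \<circ> g) id)"

definition coarsely_equivalent ::
  "'a set \<Rightarrow> 'a set set set \<Rightarrow> 'b set \<Rightarrow> 'b set set set \<Rightarrow> bool" where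
  "coarsely_equivalent X LX Y LY \<longleftrightarrow> (\<exists>f. coarse_equivalence X LX Y LY f)"

end

theory Submission
  imports Defs
begin

text \<open>
  An end E of Y is pushed forward along a coarse map g from Y to X to the family of coarsely
  clopen sets A in X whose preimage under g lies in E. Preimages of coarsely clopen sets under
  coarse, large scale continuous maps are coarsely clopen, and ends are closed under changes by
  bounded sets. If f and g are coarse inverses, the preimage of B under f \<circ> g differs from B only
  by a bounded set (closeness to the identity moves points inside one uniformly bounded set), so
  the push-forwards along g and f are mutually inverse. They are continuous because the preimage
  of a basic set A_end is (Y \<inter> g -` A)_end, and for any coarsely clopen B the set B_end equals
  U_end for the open set U = st(B, W), W a uniformly bounded cover by open sets: U differs from B
  by a bounded set.
\<close>

lemma large_scale_space_cover: "large_scale_space X L \<Longrightarrow> U \<in> L \<Longrightarrow> is_cover X U"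
  unfolding large_scale_space_def by blast

lemma ls_bounded_subset: "ls_bounded L B \<Longrightarrow> A \<subseteq> B \<Longrightarrow> ls_bounded L A"
  unfolding ls_bounded_def by blast

lemma ls_bounded_Un:
  "large_scale_space X L \<Longrightarrow> ls_bounded L A \<Longrightarrow> ls_bounded L B \<Longrightarrow> ls_bounded L (A \<union> B)"
  unfolding large_scale_space_def by blast

lemma mem_st_set: "x \<in> st_set A U \<longleftrightarrow> (\<exists>a\<in>A. \<exists>C\<in>U. a \<in> C \<and> x \<in> C)"
  unfolding st_set_def st_pt_def by blast

lemma st_set_mono: "A \<subseteq> B \<Longrightarrow> st_set A U \<subseteq> st_set B U"
  unfolding st_set_def by blast

lemma st_set_superset: "is_cover X U \<Longrightarrow> A \<subseteq> X \<Longrightarrow> A \<subseteq> st_set A U"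
  unfolding is_cover_def st_set_def st_pt_def by blast

lemma st_set_subset_cover: "is_cover X U \<Longrightarrow> st_set A U \<subseteq> X"
  unfolding is_cover_def st_set_def st_pt_def by blast

lemma image_st_set_subset:
  assumes "\<forall>A\<in>U. \<exists>C\<in>V. f ` A \<subseteq> C"
  shows "f ` st_set S U \<subseteq> st_set (f ` S) V"
proof
  fix y assume "y \<in> f ` st_set S U"
  then obtain x where "y = f x" "x \<in> st_set S U" by blast
  then obtain a A where "a \<in> S" "A \<in> U" "a \<in> A" "x \<in> A" unfolding mem_st_set by blast
  moreover obtain C where "C \<in> V" "f ` A \<subseteq> C" using assms \<open>A \<in> U\<close> by blast
  ultimately have "f a \<in> f ` S" "C \<in> V" "f a \<in> C" "y \<in> C" using \<open>y = f x\<close> by auto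
  then show "y \<in> st_set (f ` S) V" unfolding mem_st_set by blast
qed

lemma openin_st_set: "(\<And>A. A \<in> U \<Longrightarrow> openin T A) \<Longrightarrow> openin T (st_set B U)"
  unfolding st_set_def st_pt_def by (auto intro!: openin_Union)

lemma ls_bounded_st_set:
  assumes "large_scale_space X L" "ls_bounded L D" "U \<in> L"
  shows "ls_bounded L (st_set D U)"
proof -
  obtain V A where "V \<in> L" "A \<in> V" "D \<subseteq> A"
    using assms(2) unfolding ls_bounded_def by blast
  moreover have "st_cov V U \<in> L"
    using assms(1) \<open>V \<in> L\<close> \<open>U \<in> L\<close> unfolding large_scale_space_def by blast
  moreover have "st_set A U \<in> st_cov V U" using \<open>A \<in> V\<close> unfolding st_cov_def by blast
  ultimately show ?thesis
    unfolding ls_bounded_def using st_set_mono[of D A U] by blast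
qed

lemma coarsely_clopen_subset: "coarsely_clopen X L A \<Longrightarrow> A \<subseteq> X"
  unfolding coarsely_clopen_def by blast

lemma coarsely_clopen_Un_bounded:
  assumes L: "large_scale_space X L" and A: "coarsely_clopen X L A"
    and D: "ls_bounded L D" "D \<subseteq> X"
  shows "coarsely_clopen X L (A \<union> D)"
  unfolding coarsely_clopen_def
proof (intro conjI ballI)
  show "A \<union> D \<subseteq> X" using coarsely_clopen_subset[OF A] D(2) by blast
  fix U assume U: "U \<in> L"
  have "st_set (A \<union> D) U \<inter> st_set (X - (A \<union> D)) U
        \<subseteq> (st_set A U \<inter> st_set (X - A) U) \<union> st_set D U"
    using st_set_mono[of "X - (A \<union> D)" "X - A" U] unfolding st_set_def by blast
  moreover have "ls_bounded L ((st_set A U \<inter> st_set (X - A) U) \<union> st_set D U)"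
    using A U ls_bounded_st_set[OF L D(1) U] ls_bounded_Un[OF L]
    unfolding coarsely_clopen_def by blast
  ultimately show "ls_bounded L (st_set (A \<union> D) U \<inter> st_set (X - (A \<union> D)) U)"
    using ls_bounded_subset by blast
qed

lemma coarsely_clopen_vimage:
  assumes f: "f ` X \<subseteq> Y" "coarse_map X LX Y LY f" "ls_continuous LX LY f"
    and LX: "large_scale_space X LX" and B: "coarsely_clopen Y LY B"
  shows "coarsely_clopen X LX (X \<inter> f -` B)"
  unfolding coarsely_clopen_def
proof (intro conjI ballI)
  show "X \<inter> f -` B \<subseteq> X" by blast
  fix U assume "U \<in> LX"
  then have "\<exists>V\<in>LY. \<forall>A\<in>U. \<exists>C\<in>V. f ` A \<subseteq> C"
    using f(3) unfolding ls_continuous_def by simp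
  then obtain V where V: "V \<in> LY" "\<forall>A\<in>U. \<exists>C\<in>V. f ` A \<subseteq> C" by blast
  have "is_cover X U" using LX \<open>U \<in> LX\<close> by (rule large_scale_space_cover)
  have "f ` st_set (X \<inter> f -` B) U \<subseteq> st_set B V"
    using image_st_set_subset[OF V(2)] st_set_mono[of "f ` (X \<inter> f -` B)" B V] by blast
  moreover have "f ` st_set (X - X \<inter> f -` B) U \<subseteq> st_set (Y - B) V"
    using image_st_set_subset[OF V(2)] st_set_mono[of "f ` (X - X \<inter> f -` B)" "Y - B" V] f(1)
    by blast
  ultimately have "st_set (X \<inter> f -` B) U \<inter> st_set (X - X \<inter> f -` B) U
      \<subseteq> X \<inter> f -` (st_set B V \<inter> st_set (Y - B) V)"
    using st_set_subset_cover[OF \<open>is_cover X U\<close>] by blast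
  moreover have "ls_bounded LY (st_set B V \<inter> st_set (Y - B) V)"
    using B V(1) unfolding coarsely_clopen_def by blast
  ultimately show "ls_bounded LX (st_set (X \<inter> f -` B) U \<inter> st_set (X - X \<inter> f -` B) U)"
    using f(2) ls_bounded_subset unfolding coarse_map_def by blast
qed

lemma maps_close_id_diff_bounded:
  assumes "maps_close X L h id" "coarsely_clopen X L A" "h ` X \<subseteq> X"
  shows "ls_bounded L (A - {x\<in>X. h x \<in> A})" "ls_bounded L ({x\<in>X. h x \<in> A} - A)"
proof -
  obtain W where W: "W \<in> L" "\<forall>x\<in>X. h x \<in> st_pt x W"
    using assms(1) unfolding maps_close_def by auto
  have "(A - {x\<in>X. h x \<in> A}) \<union> ({x\<in>X. h x \<in> A} - A) \<subseteq> st_set A W \<inter> st_set (X - A) W"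
  proof
    fix x assume x: "x \<in> (A - {x\<in>X. h x \<in> A}) \<union> ({x\<in>X. h x \<in> A} - A)"
    then have "x \<in> X" using coarsely_clopen_subset[OF assms(2)] by blast
    then obtain C where "C \<in> W" "x \<in> C" "h x \<in> C" using W(2) unfolding st_pt_def by blast
    moreover have "h x \<in> X" using \<open>x \<in> X\<close> assms(3) by blast
    ultimately show "x \<in> st_set A W \<inter> st_set (X - A) W"
      using x \<open>x \<in> X\<close> unfolding Int_iff mem_st_set by (cases "x \<in> A") blast+
  qed
  moreover have "ls_bounded L (st_set A W \<inter> st_set (X - A) W)"
    using assms(2) W(1) unfolding coarsely_clopen_def by blast
  ultimately show "ls_bounded L (A - {x\<in>X. h x \<in> A})" "ls_bounded L ({x\<in>X. h x \<in> A} - A)"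
    using ls_bounded_subset by blast+
qed

subsection \<open>Ends\<close>

lemma end_fin_unbounded_family: "is_end X L E \<Longrightarrow> fin_unbounded_family X L E"
  unfolding is_end_def by blast

lemma end_coarsely_clopen: "is_end X L E \<Longrightarrow> A \<in> E \<Longrightarrow> coarsely_clopen X L A"
  and end_unbounded: "is_end X L E \<Longrightarrow> A \<in> E \<Longrightarrow> \<not> ls_bounded L A"
  unfolding is_end_def fin_unbounded_family_def by blast+

lemma fin_unbounded_family_Inter:
  "fin_unbounded_family X L E \<Longrightarrow> F \<subseteq> E \<Longrightarrow> finite F \<Longrightarrow> F \<noteq> {} \<Longrightarrow>
    \<not> ls_bounded L (\<Inter>F)"
  unfolding fin_unbounded_family_def by blast

lemma fin_unbounded_family_Inter_Int:
  assumes "fin_unbounded_family X L E" "A \<in> E" "F \<subseteq> E" "finite F"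
  shows "\<not> ls_bounded L (\<Inter>F \<inter> A)"
  using fin_unbounded_family_Inter[OF assms(1), of "insert A F"] assms(2-4)
  by (simp add: Int_commute)

lemma fin_unbounded_family_insert:
  assumes E: "fin_unbounded_family X L E" and A: "coarsely_clopen X L A"
    and H: "\<forall>F. F \<subseteq> E \<and> finite F \<longrightarrow> \<not> ls_bounded L (\<Inter>F \<inter> A)"
  shows "fin_unbounded_family X L (insert A E)"
  unfolding fin_unbounded_family_def
proof (intro conjI allI impI)
  have "\<not> ls_bounded L A" using H[rule_format, of "{}"] by simp
  then show "\<forall>C\<in>insert A E. coarsely_clopen X L C \<and> \<not> ls_bounded L C"
    using A E unfolding fin_unbounded_family_def by blast
next
  fix F assume F: "F \<subseteq> insert A E \<and> finite F \<and> F \<noteq> {}"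
  show "\<not> ls_bounded L (\<Inter>F)"
  proof (cases "A \<in> F")
    case True
    then have "\<Inter>F = \<Inter>(F - {A}) \<inter> A" by blast
    moreover have "F - {A} \<subseteq> E" "finite (F - {A})" using F by auto
    ultimately show ?thesis using H by simp
  next
    case False
    then show ?thesis using fin_unbounded_family_Inter[OF E] F by blast
  qed
qed

lemma end_mem_iff:
  assumes E: "is_end X L E" and A: "coarsely_clopen X L A"
  shows "A \<in> E \<longleftrightarrow> (\<forall>F. F \<subseteq> E \<and> finite F \<longrightarrow> \<not> ls_bounded L (\<Inter>F \<inter> A))"
proof
  assume "A \<in> E"
  show "\<forall>F. F \<subseteq> E \<and> finite F \<longrightarrow> \<not> ls_bounded L (\<Inter>F \<inter> A)"
    using fin_unbounded_family_Inter_Int[OF end_fin_unbounded_family[OF E] \<open>A \<in> E\<close>] by blast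
next
  assume "\<forall>F. F \<subseteq> E \<and> finite F \<longrightarrow> \<not> ls_bounded L (\<Inter>F \<inter> A)"
  with fin_unbounded_family_insert[OF end_fin_unbounded_family[OF E] A]
  have "fin_unbounded_family X L (insert A E)" .
  then show "A \<in> E" using E unfolding is_end_def by blast
qed

lemma is_endI:
  assumes E: "fin_unbounded_family X L E"
    and H: "\<And>A. coarsely_clopen X L A \<Longrightarrow>
              \<forall>F. F \<subseteq> E \<and> finite F \<longrightarrow> \<not> ls_bounded L (\<Inter>F \<inter> A) \<Longrightarrow> A \<in> E"
  shows "is_end X L E"
  unfolding is_end_def
proof (intro conjI allI impI E)
  fix E' assume E': "fin_unbounded_family X L E' \<and> E \<subseteq> E'"
  have "A \<in> E" if "A \<in> E'" for A
  proof (rule H)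
    show "coarsely_clopen X L A" using E' \<open>A \<in> E'\<close> unfolding fin_unbounded_family_def by blast
    show "\<forall>F. F \<subseteq> E \<and> finite F \<longrightarrow> \<not> ls_bounded L (\<Inter>F \<inter> A)"
      using E' \<open>A \<in> E'\<close> fin_unbounded_family_Inter_Int[of X L E' A] by blast
  qed
  then show "E' = E" using E' by blast
qed

lemma end_mem_coarse_superset:
  assumes E: "is_end X L E" and A: "A \<in> E" and B: "coarsely_clopen X L B"
    and AB: "\<And>S. ls_bounded L (S \<inter> B) \<Longrightarrow> ls_bounded L (S \<inter> A)"
  shows "B \<in> E"
  using end_mem_iff[OF E B] end_mem_iff[OF E end_coarsely_clopen[OF E A]] A AB by blast

lemma end_mem_superset:
  assumes "is_end X L E" "A \<in> E" "coarsely_clopen X L B" "A \<subseteq> B"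
  shows "B \<in> E"
proof (rule end_mem_coarse_superset[OF assms(1-3)])
  fix S assume "ls_bounded L (S \<inter> B)"
  then show "ls_bounded L (S \<inter> A)" by (rule ls_bounded_subset) (use assms(4) in blast)
qed

lemma end_mem_bounded_diff:
  assumes "large_scale_space X L" "is_end X L E" "A \<in> E" "coarsely_clopen X L B"
    and "ls_bounded L (A - B)"
  shows "B \<in> E"
proof (rule end_mem_coarse_superset[OF assms(2-4)])
  fix S assume "ls_bounded L (S \<inter> B)"
  then have "ls_bounded L ((S \<inter> B) \<union> (A - B))" using ls_bounded_Un assms(1,5) by blast
  then show "ls_bounded L (S \<inter> A)" by (rule ls_bounded_subset) blast
qed

lemma coarsely_clopen_open_representative:
  assumes T: "topological_large_scale_space T L" and B: "coarsely_clopen (topspace T) L B"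
  obtains U where "openin T U" "coarsely_clopen (topspace T) L U"
    "\<And>E. is_end (topspace T) L E \<Longrightarrow> B \<in> E \<longleftrightarrow> U \<in> E"
proof -
  let ?X = "topspace T"
  have L: "large_scale_space ?X L" using T unfolding topological_large_scale_space_def by blast
  obtain W where W: "W \<in> L" "\<And>A. A \<in> W \<Longrightarrow> openin T A"
    using T unfolding topological_large_scale_space_def by blast
  have cov: "is_cover ?X W" using L W(1) by (rule large_scale_space_cover)
  define U where "U = st_set B W"
  have BU: "B \<subseteq> U"
    unfolding U_def using st_set_superset[OF cov coarsely_clopen_subset[OF B]] .
  have "U - B \<subseteq> st_set B W \<inter> st_set (?X - B) W"
    using st_set_subset_cover[OF cov] st_set_superset[OF cov, of "?X - B"] unfolding U_def by blast
  then have bd: "ls_bounded L (U - B)"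
    using B W(1) ls_bounded_subset unfolding coarsely_clopen_def by blast
  have "U = B \<union> (U - B)" using BU by blast
  then have ccU: "coarsely_clopen ?X L U"
    using coarsely_clopen_Un_bounded[OF L B bd] st_set_subset_cover[OF cov] unfolding U_def
    by force
  show thesis
  proof
    show "openin T U" unfolding U_def using W(2) by (rule openin_st_set)
    show "coarsely_clopen ?X L U" by (rule ccU)
    show "B \<in> E \<longleftrightarrow> U \<in> E" if "is_end ?X L E" for E
      using end_mem_superset[OF that _ ccU BU] end_mem_bounded_diff[OF L that _ B bd] by blast
  qed
qed

subsection \<open>The map on ends induced by a coarse equivalence\<close>

definition end_map ::
  "'b set \<Rightarrow> 'a set \<Rightarrow> 'a set set set \<Rightarrow> ('b \<Rightarrow> 'a) \<Rightarrow> 'b set set \<Rightarrow> 'a set set" where "end_map Y X LX g E = {A. coarsely_clopen X LX A \<and> Y \<inter> g -` A \<in> E}"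

locale coarse_inverses =
  fixes X :: "'a set" and LX :: "'a set set set" and Y :: "'b set" and LY :: "'b set set set"
    and f :: "'a \<Rightarrow> 'b" and g :: "'b \<Rightarrow> 'a"
  assumes LX: "large_scale_space X LX" and LY: "large_scale_space Y LY"
    and f: "f ` X \<subseteq> Y" "coarse_map X LX Y LY f" "ls_continuous LX LY f"
    and g: "g ` Y \<subseteq> X" "coarse_map Y LY X LX g" "ls_continuous LY LX g"
    and gf_close: "maps_close X LX (g \<circ> f) id" and fg_close: "maps_close Y LY (f \<circ> g) id"
begin

lemma swap: "coarse_inverses Y LY X LX g f"
  using LX LY f g gf_close fg_close by unfold_locales

lemma fg_into: "(f \<circ> g) ` Y \<subseteq> Y" and gf_into: "(g \<circ> f) ` X \<subseteq> X"
  using f(1) g(1) by auto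

lemma mem_end_map: "coarsely_clopen X LX A \<Longrightarrow> A \<in> end_map Y X LX g E \<longleftrightarrow> Y \<inter> g -` A \<in> E"
  unfolding end_map_def by blast

lemma vimage_vimage_eq: "Y \<inter> g -` (X \<inter> f -` B) = {y\<in>Y. (f \<circ> g) y \<in> B}"
  using g(1) by auto

lemma vimage_vimage_mem_end:
  assumes E: "is_end Y LY E" and B: "B \<in> E"
  shows "Y \<inter> g -` (X \<inter> f -` B) \<in> E"
proof (rule end_mem_bounded_diff[OF LY E B])
  have "coarsely_clopen Y LY B" using E B by (rule end_coarsely_clopen)
  then show "coarsely_clopen Y LY (Y \<inter> g -` (X \<inter> f -` B))"
    using coarsely_clopen_vimage[OF g LY coarsely_clopen_vimage[OF f LX]] by blast
  show "ls_bounded LY (B - Y \<inter> g -` (X \<inter> f -` B))"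
    unfolding vimage_vimage_eq
    using maps_close_id_diff_bounded(1)[OF fg_close \<open>coarsely_clopen Y LY B\<close> fg_into] .
qed

lemma vimage_mem_end_map: "is_end Y LY E \<Longrightarrow> B \<in> E \<Longrightarrow> X \<inter> f -` B \<in> end_map Y X LX g E"
  unfolding end_map_def
  using vimage_vimage_mem_end coarsely_clopen_vimage[OF f LX] end_coarsely_clopen by blast

lemma fin_unbounded_family_end_map:
  assumes E: "is_end Y LY E"
  shows "fin_unbounded_family X LX (end_map Y X LX g E)"
  unfolding fin_unbounded_family_def
proof (rule conjI; intro allI impI ballI)
  fix A assume "A \<in> end_map Y X LX g E"
  then have "coarsely_clopen X LX A" "Y \<inter> g -` A \<in> E" unfolding end_map_def by auto
  then show "coarsely_clopen X LX A \<and> \<not> ls_bounded LX A"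
    using end_unbounded[OF E] g(2) unfolding coarse_map_def by blast
next
  fix F assume F: "F \<subseteq> end_map Y X LX g E \<and> finite F \<and> F \<noteq> {}"
  have "(\<lambda>A. Y \<inter> g -` A) ` F \<subseteq> E" using F unfolding end_map_def by auto
  then have "\<not> ls_bounded LY (\<Inter>((\<lambda>A. Y \<inter> g -` A) ` F))"
    using fin_unbounded_family_Inter[OF end_fin_unbounded_family[OF E]] F by blast
  moreover have "\<Inter>((\<lambda>A. Y \<inter> g -` A) ` F) = Y \<inter> g -` \<Inter>F" using F by auto
  ultimately show "\<not> ls_bounded LX (\<Inter>F)" using g(2) unfolding coarse_map_def by metis
qed

lemma end_map_is_end:
  assumes E: "is_end Y LY E"
  shows "is_end X LX (end_map Y X LX g E)"
proof (rule is_endI[OF fin_unbounded_family_end_map[OF E]])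
  fix A assume A: "coarsely_clopen X LX A"
    and H: "\<forall>F. F \<subseteq> end_map Y X LX g E \<and> finite F \<longrightarrow> \<not> ls_bounded LX (\<Inter>F \<inter> A)"
  have "Y \<inter> g -` A \<in> E"
    unfolding end_mem_iff[OF E coarsely_clopen_vimage[OF g LY A]]
  proof (intro allI impI notI)
    fix F assume F: "F \<subseteq> E \<and> finite F" and bd: "ls_bounded LY (\<Inter>F \<inter> (Y \<inter> g -` A))"
    have "\<Inter>((\<lambda>B. X \<inter> f -` B) ` F) \<inter> A
          \<subseteq> (X \<inter> f -` (\<Inter>F \<inter> (Y \<inter> g -` A))) \<union> (A - {x\<in>X. (g \<circ> f) x \<in> A})"
      using coarsely_clopen_subset[OF A] f(1) by auto
    moreover have "ls_bounded LX (X \<inter> f -` (\<Inter>F \<inter> (Y \<inter> g -` A)))"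
      using f(2) bd unfolding coarse_map_def by blast
    moreover have "ls_bounded LX (A - {x\<in>X. (g \<circ> f) x \<in> A})"
      using maps_close_id_diff_bounded(1)[OF gf_close A gf_into] .
    ultimately have "ls_bounded LX (\<Inter>((\<lambda>B. X \<inter> f -` B) ` F) \<inter> A)"
      using ls_bounded_Un[OF LX] ls_bounded_subset by blast
    moreover have "(\<lambda>B. X \<inter> f -` B) ` F \<subseteq> end_map Y X LX g E"
      using vimage_mem_end_map[OF E] F by blast
    ultimately show False using H F by blast
  qed
  then show "A \<in> end_map Y X LX g E" unfolding end_map_def using A by blast
qed

lemma end_map_inverse:
  assumes E: "is_end Y LY E"
  shows "end_map X Y LY f (end_map Y X LX g E) = E"
proof (intro equalityI subsetI)
  fix B assume "B \<in> end_map X Y LY f (end_map Y X LX g E)"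
  then have B: "coarsely_clopen Y LY B" and "Y \<inter> g -` (X \<inter> f -` B) \<in> E"
    unfolding end_map_def by auto
  moreover have "ls_bounded LY ({y\<in>Y. (f \<circ> g) y \<in> B} - B)"
    using maps_close_id_diff_bounded(2)[OF fg_close B fg_into] .
  ultimately show "B \<in> E"
    using end_mem_bounded_diff[OF LY E] unfolding vimage_vimage_eq by blast
next
  fix B assume "B \<in> E"
  then show "B \<in> end_map X Y LY f (end_map Y X LX g E)"
    using vimage_mem_end_map[OF E] end_coarsely_clopen[OF E] unfolding end_map_def[of X] by blast
qed

end

lemma coarse_equivalence_imp_coarse_inverses:
  assumes "large_scale_space X LX" "large_scale_space Y LY" "coarse_equivalence X LX Y LY f"
  obtains g where "coarse_inverses X LX Y LY f g"
  using assms unfolding coarse_equivalence_def coarse_inverses_def by blast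

subsection \<open>Continuity of the induced map\<close>

definition ends_basis :: "'a topology \<Rightarrow> 'a set set set \<Rightarrow> 'a set set set set" where
  "ends_basis T L =
     {{E \<in> Ends (topspace T) L. U \<in> E} | U. openin T U \<and> coarsely_clopen (topspace T) L U}"

lemma ends_topology_eq:
  "ends_topology T L = subtopology (topology_generated_by (ends_basis T L)) (Ends (topspace T) L)"
  unfolding ends_topology_def ends_basis_def ..

lemma topspace_ends_topology:
  assumes "topological_large_scale_space T L"
  shows "topspace (ends_topology T L) = {E \<in> Ends (topspace T) L. E \<noteq> {}}"
proof -
  have "E \<in> \<Union>(ends_basis T L) \<longleftrightarrow> E \<noteq> {}" if E: "is_end (topspace T) L E" for E
  proof
    assume "E \<noteq> {}"
    then obtain B where "B \<in> E" by blast
    then obtain U where "openin T U" "coarsely_clopen (topspace T) L U" "U \<in> E"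
      using coarsely_clopen_open_representative[OF assms end_coarsely_clopen[OF E \<open>B \<in> E\<close>]] E
      by metis
    then have "E \<in> {D \<in> Ends (topspace T) L. U \<in> D}"
      and "{D \<in> Ends (topspace T) L. U \<in> D} \<in> ends_basis T L"
      using E unfolding ends_basis_def Ends_def by auto
    then show "E \<in> \<Union>(ends_basis T L)" by blast
  qed (auto simp: ends_basis_def)
  then show ?thesis unfolding ends_topology_eq by (auto simp: Ends_def)
qed

lemma openin_ends_topology_mem:
  assumes T: "topological_large_scale_space T L" and B: "coarsely_clopen (topspace T) L B"
  shows "openin (ends_topology T L) {E \<in> Ends (topspace T) L. B \<in> E}"
proof -
  obtain U where U: "openin T U" "coarsely_clopen (topspace T) L U"
    "\<And>E. is_end (topspace T) L E \<Longrightarrow> B \<in> E \<longleftrightarrow> U \<in> E"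
    using coarsely_clopen_open_representative[OF T B] by blast
  then have "{E \<in> Ends (topspace T) L. B \<in> E} \<in> ends_basis T L"
    unfolding ends_basis_def Ends_def by auto
  then show ?thesis
    unfolding ends_topology_eq openin_subtopology
    by (blast intro: topology_generated_by_Basis)
qed

lemma continuous_map_end_map:
  assumes TX: "topological_large_scale_space TX LX"
    and TY: "topological_large_scale_space TY LY"
    and fg: "coarse_inverses (topspace TX) LX (topspace TY) LY f g"
  shows "continuous_map (ends_topology TY LY) (ends_topology TX LX)
           (end_map (topspace TY) (topspace TX) LX g)"
proof -
  interpret coarse_inverses "topspace TX" LX "topspace TY" LY f g by (rule fg)
  let ?g = "end_map (topspace TY) (topspace TX) LX g"
  have maps: "?g ` topspace (ends_topology TY LY) \<subseteq> topspace (ends_topology TX LX)"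
    unfolding topspace_ends_topology[OF TX] topspace_ends_topology[OF TY] Ends_def
    using end_map_is_end vimage_mem_end_map by blast
  show ?thesis
    unfolding ends_topology_eq[of TX]
  proof (intro continuous_map_into_subtopology continuous_on_generated_topo)
    fix S assume "S \<in> ends_basis TX LX"
    then obtain A where A: "coarsely_clopen (topspace TX) LX A"
      and S: "S = {D \<in> Ends (topspace TX) LX. A \<in> D}"
      unfolding ends_basis_def by blast
    have "?g -` S \<inter> topspace (ends_topology TY LY)
          = {E \<in> Ends (topspace TY) LY. topspace TY \<inter> g -` A \<in> E}"
      unfolding S topspace_ends_topology[OF TY] using end_map_is_end
      by (auto simp: mem_end_map[OF A] Ends_def)
    then show "openin (ends_topology TY LY) (?g -` S \<inter> topspace (ends_topology TY LY))"
      using openin_ends_topology_mem[OF TY coarsely_clopen_vimage[OF g LY A]] by simp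
  next
    show "?g ` topspace (ends_topology TY LY) \<subseteq> \<Union>(ends_basis TX LX)"
      using maps unfolding ends_topology_eq[of TX] by auto
    show "?g \<in> topspace (ends_topology TY LY) \<rightarrow> Ends (topspace TX) LX"
      using maps unfolding ends_topology_eq[of TX] by auto
  qed
qed

theorem corollary2p27:
  fixes TX :: "'a topology" and LX :: "'a set set set"
    and TY :: "'b topology" and LY :: "'b set set set"
  assumes "topological_large_scale_space TX LX"
    and "topological_large_scale_space TY LY"
    and "coarsely_equivalent (topspace TX) LX (topspace TY) LY"
  shows "ends_topology TX LX homeomorphic_space ends_topology TY LY"
proof -
  have L: "large_scale_space (topspace TX) LX" "large_scale_space (topspace TY) LY"
    using assms(1,2) unfolding topological_large_scale_space_def by blast+
  obtain f g where fg: "coarse_inverses (topspace TX) LX (topspace TY) LY f g"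
    using assms(3) coarse_equivalence_imp_coarse_inverses[OF L]
    unfolding coarsely_equivalent_def by metis
  have gf: "coarse_inverses (topspace TY) LY (topspace TX) LX g f"
    using fg by (rule coarse_inverses.swap)
  have "homeomorphic_maps (ends_topology TX LX) (ends_topology TY LY)
          (end_map (topspace TX) (topspace TY) LY f) (end_map (topspace TY) (topspace TX) LX g)"
    unfolding homeomorphic_maps_def
    using continuous_map_end_map[OF assms(1,2) fg] continuous_map_end_map[OF assms(2,1) gf]
      coarse_inverses.end_map_inverse[OF fg] coarse_inverses.end_map_inverse[OF gf]
      topspace_ends_topology[OF assms(1)] topspace_ends_topology[OF assms(2)]
    by (auto simp: Ends_def)
  then show ?thesis by (rule homeomorphic_maps_imp_homeomorphic_space)
qed

end
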